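(* Let $X$ be a complex Banach space with two bounded symmetric pairs $(Q,V)$ and $(R,W)$. Let $h\in\{1,-1\}$ and $c\ge0$. Assume $hQ$ is positive semi-definite and $\gamma(Q)>0$. Let $V_0\subset V^Q$ and $W_0\subset W^R$ be closed linear subspaces of $X$ with $n:=\dim V^Q/V_0$ finite. Assume $$\delta(W,V)+\delta(V_0,W_0)<\frac{1}{2^{n+1}(n+1)}.$$ Set $\delta:=\frac{2^{n+1}(n+1)\delta(W,V)}{1-2^{n+1}(n+1)\delta(W,V)}$, $d:=\gamma(Q)^{-1}$, $e:=2\delta_c(Q,R)$, $f:=2\delta_c(Q,R)+2c$, and assume $$\big(d(2+\delta)(e+f\delta)\big)^{1/2}<\frac{1-2^{n+1}(n+1)(\delta(W,V)+\delta(V_0,W_0))}{2^{n+1}(n+1)(1+\delta(V_0,W_0))}.$$ Then $m^-(hR)+\dim W^R/W_0\le n$.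
   Context: A bounded symmetric pair $(Q,V)$ consists of a closed subspace $V\subset X$ and a Hermitian sesquilinear form $Q\colon V\times V\to\mathbb{C}$ with $\sup_{x,y\in V\setminus\{0\}}|Q(x,y)|/(\|x\|\|y\|)<\infty$. $V^Q:=\{u\in V: Q(u,v)=0\ \forall v\in V\}$ (similarly $W^R$). For a bounded semi-definite form $Q$ on $V$, $\gamma(Q):=\inf_{x\in V\setminus V^Q}|Q(x,x)|/\operatorname{dist}(x,V^Q)^2$ ($0$ if $V=\{0\}$). $m^-(hR)$ is the supremum of dimensions of subspaces of $W$ on which $hR$ is negative definite. For linear subspaces $A,B$: $\delta(A,B):=\sup_{u\in A,\|u\|=1}\operatorname{dist}(u,B)$ ($0$ if $A=\{0\}$). $\delta_c(Q,R)$ is the infimum of $\delta'\ge0$ such that $|Q(x,y)-R(u,v)|\le\delta'(\|u\|+\|x\|)(\|v\|+\|y\|)+c\big((\|u\|+\|x\|)\|v-y\|+\|u-x\|(\|v\|+\|y\|)\big)$ for all $x,y\in V$, $u,v\in W$. *)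

theory Defs
  imports "HOL-Analysis.Analysis"
begin

class complex_normed_vector = real_normed_vector +
  fixes scaleC :: "complex \<Rightarrow> 'a \<Rightarrow> 'a" (infixr "*\<^sub>C" 75)
  assumes scaleC_add_right: "a *\<^sub>C (x + y) = a *\<^sub>C x + a *\<^sub>C y"
    and scaleC_add_left: "(a + b) *\<^sub>C x = a *\<^sub>C x + b *\<^sub>C x"
    and scaleC_scaleC: "a *\<^sub>C (b *\<^sub>C x) = (a * b) *\<^sub>C x"
    and scaleC_one: "1 *\<^sub>C x = x"
    and scaleR_scaleC: "r *\<^sub>R x = complex_of_real r *\<^sub>C x"
    and norm_scaleC: "norm (a *\<^sub>C x) = cmod a * norm x"

text \<open>A complex Banach space is a complete complex normed vector space:
  type class constraint {complex_normed_vector, complete_space}.\<close>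

definition csubspace :: "'a::complex_normed_vector set \<Rightarrow> bool" where
  "csubspace V \<longleftrightarrow> 0 \<in> V \<and> (\<forall>x\<in>V. \<forall>y\<in>V. x + y \<in> V) \<and> (\<forall>a. \<forall>x\<in>V. a *\<^sub>C x \<in> V)"

definition closed_csubspace :: "'a::complex_normed_vector set \<Rightarrow> bool" where
  "closed_csubspace V \<longleftrightarrow> csubspace V \<and> closed V"

text \<open>Hermitian sesquilinear form on V (linear in the first argument; conjugate
  linearity in the second follows from the Hermitian symmetry).\<close>
definition hermitian_sesq :: "'a::complex_normed_vector set \<Rightarrow> ('a \<Rightarrow> 'a \<Rightarrow> complex) \<Rightarrow> bool" where
  "hermitian_sesq V Q \<longleftrightarrow>
     (\<forall>x\<in>V. \<forall>y\<in>V. \<forall>z\<in>V. Q (x + y) z = Q x z + Q y z) \<and>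
     (\<forall>a. \<forall>x\<in>V. \<forall>z\<in>V. Q (a *\<^sub>C x) z = a * Q x z) \<and>
     (\<forall>x\<in>V. \<forall>y\<in>V. Q y x = cnj (Q x y))"

definition bounded_symmetric_pair :: "('a::complex_normed_vector \<Rightarrow> 'a \<Rightarrow> complex) \<Rightarrow> 'a set \<Rightarrow> bool" where
  "bounded_symmetric_pair Q V \<longleftrightarrow> closed_csubspace V \<and> hermitian_sesq V Q \<and>
     (\<exists>M. \<forall>x\<in>V. \<forall>y\<in>V. cmod (Q x y) \<le> M * norm x * norm y)"

definition radical :: "('a \<Rightarrow> 'a \<Rightarrow> complex) \<Rightarrow> 'a set \<Rightarrow> 'a set" where
  "radical Q V = {u\<in>V. \<forall>v\<in>V. Q u v = 0}"

text \<open>gamma(Q), with value in the extended reals (infimum of the empty set is +infinity).\<close>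
definition gamma_form :: "('a::complex_normed_vector \<Rightarrow> 'a \<Rightarrow> complex) \<Rightarrow> 'a set \<Rightarrow> ereal" where
  "gamma_form Q V = (if V = {0} then 0 else
     (INF x\<in>V - radical Q V. ereal (cmod (Q x x) / (infdist x (radical Q V))\<^sup>2)))"

definition cindep_mod :: "(nat \<Rightarrow> 'a::complex_normed_vector) \<Rightarrow> nat \<Rightarrow> 'a set \<Rightarrow> bool" where
  "cindep_mod u k B \<longleftrightarrow>
     (\<forall>c::nat \<Rightarrow> complex. (\<Sum>i<k. c i *\<^sub>C u i) \<in> B \<longrightarrow> (\<forall>i<k. c i = 0))"

definition qdim :: "'a::complex_normed_vector set \<Rightarrow> 'a set \<Rightarrow> enat" where
  "qdim A B = Sup {enat k | k. \<exists>u. (\<forall>i<k. u i \<in> A) \<and> cindep_mod u k B}"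

text \<open>m^-(R) on W: supremum of the dimensions of subspaces of W on which R is negative
  definite; a k-dimensional subspace is the span of k linearly independent vectors.\<close>
definition neg_index :: "('a::complex_normed_vector \<Rightarrow> 'a \<Rightarrow> complex) \<Rightarrow> 'a set \<Rightarrow> enat" where
  "neg_index R W = Sup {enat k | k. \<exists>u. (\<forall>i<k. u i \<in> W) \<and> cindep_mod u k {0} \<and>
      (\<forall>c::nat \<Rightarrow> complex. (\<Sum>i<k. c i *\<^sub>C u i) \<noteq> 0 \<longrightarrow>
          Re (R (\<Sum>i<k. c i *\<^sub>C u i) (\<Sum>i<k. c i *\<^sub>C u i)) < 0)}"

definition gap :: "'a::real_normed_vector set \<Rightarrow> 'a set \<Rightarrow> real" where
  "gap A B = (if A \<subseteq> {0} then 0 else (SUP u\<in>{u\<in>A. norm u = 1}. infdist u B))"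

definition delta_c :: "real \<Rightarrow> ('a::complex_normed_vector \<Rightarrow> 'a \<Rightarrow> complex) \<Rightarrow> 'a set \<Rightarrow>
    ('a \<Rightarrow> 'a \<Rightarrow> complex) \<Rightarrow> 'a set \<Rightarrow> real" where
  "delta_c c Q V R W = Inf {d. d \<ge> 0 \<and> (\<forall>x\<in>V. \<forall>y\<in>V. \<forall>u\<in>W. \<forall>v\<in>W.
      cmod (Q x y - R u v) \<le> d * (norm u + norm x) * (norm v + norm y)
        + c * ((norm u + norm x) * norm (v - y) + norm (u - x) * (norm v + norm y)))}"

end

theory Submission
  imports Defs
begin

text \<open>Suppose hR is negative definite on a k1-dimensional subspace of W and k2 vectors of
  W^R are independent modulo W0, with k1 + k2 > n. Together with W0 they span a space on which
  hR is negative semi-definite, and n + 1 of the spanning vectors are independent modulo W0;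
  let E be W0 plus their span. For x in E and x' in V close to x, the opposite signs of
  hQ(x',x') and hR(x,x) give |Q(x',x')| <= |Q(x',x') - R(x,x)|, which delta_c makes small;
  gamma(Q) turns this into closeness of x' to V^Q, so every x in E lies within eta |x| of V^Q.
  By Riesz's lemma E has a theta-almost orthogonal basis f_0, ..., f_n over W0, and the
  coefficients of a combination of the f_i are bounded by ((1 + 1/theta)^(n+1) - 1) times its
  distance to W0. Approximating each f_i by some y_i in V^Q, a nontrivial relation among the
  y_i modulo V0 (which exists as dim V^Q/V0 = n) gives a combination of the f_i that is too
  close to W0 for that bound, once theta < 1 and eta are chosen by continuity from the
  smallness hypotheses.\<close>

interpretation cv: vector_space "scaleC :: complex \<Rightarrow> 'a::complex_normed_vector \<Rightarrow> 'a"
  by unfold_locales (simp_all add: scaleC_add_right scaleC_add_left scaleC_scaleC scaleC_one)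

lemma csubspace_eq_subspace: "csubspace S \<longleftrightarrow> cv.subspace S"
  unfolding csubspace_def cv.subspace_def by blast

lemmas csubspace_0 = cv.subspace_0[folded csubspace_eq_subspace]
  and csubspace_add = cv.subspace_add[folded csubspace_eq_subspace]
  and csubspace_scale = cv.subspace_scale[folded csubspace_eq_subspace]
  and csubspace_neg = cv.subspace_neg[folded csubspace_eq_subspace]
  and csubspace_diff = cv.subspace_diff[folded csubspace_eq_subspace]
  and csubspace_sum = cv.subspace_sum[folded csubspace_eq_subspace]

lemma csubspace_lincomb:
  "csubspace S \<Longrightarrow> (\<And>i. i < k \<Longrightarrow> u i \<in> S) \<Longrightarrow> (\<Sum>i<k. c i *\<^sub>C u i) \<in> S"
  by (auto intro: csubspace_sum csubspace_scale)

lemma continuous_on_scaleC_left [continuous_intros]: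
  assumes "continuous_on S f"
  shows "continuous_on S (\<lambda>t. f t *\<^sub>C v)"
proof -
  have "(norm v)-lipschitz_on UNIV (\<lambda>t. t *\<^sub>C v)"
    by (intro lipschitz_onI)
      (auto simp: dist_norm norm_scaleC mult.commute simp flip: cv.scale_left_diff_distrib)
  then have "continuous_on UNIV (\<lambda>t. t *\<^sub>C v)"
    by (rule lipschitz_on_continuous_on)
  from continuous_on_compose2[OF this assms] show ?thesis
    by auto
qed

lemma le_infdist:
  assumes "A \<noteq> {}" "\<And>a. a \<in> A \<Longrightarrow> d \<le> dist x a"
  shows "d \<le> infdist x A"
  unfolding infdist_notempty[OF assms(1)] using assms by (intro cINF_greatest) auto

lemma infdist_lessE:
  assumes "A \<noteq> {}" "infdist x A < d"
  obtains a where "a \<in> A" "dist x a < d"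
proof -
  have "\<not> (\<forall>a\<in>A. d \<le> dist x a)"
    using assms le_infdist[of A d x] by auto
  then show ?thesis using that by (auto simp: not_le)
qed

lemma infdist_scaleC_le:
  assumes Y: "csubspace Y"
  shows "infdist (a *\<^sub>C x) Y \<le> cmod a * infdist x Y"
proof (cases "a = 0")
  case True
  then show ?thesis using csubspace_0[OF Y] by (simp add: infdist_nonneg)
next
  case False
  have "infdist (a *\<^sub>C x) Y / cmod a \<le> infdist x Y"
  proof (rule le_infdist)
    fix z assume "z \<in> Y"
    then have "infdist (a *\<^sub>C x) Y \<le> dist (a *\<^sub>C x) (a *\<^sub>C z)"
      by (intro infdist_le csubspace_scale[OF Y])
    also have "\<dots> = cmod a * dist x z"
      by (simp add: dist_norm norm_scaleC flip: cv.scale_right_diff_distrib)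
    finally show "infdist (a *\<^sub>C x) Y / cmod a \<le> dist x z"
      using False by (simp add: divide_simps mult.commute)
  qed (use csubspace_0[OF Y] in auto)
  then show ?thesis using False by (simp add: divide_simps mult.commute)
qed

lemma infdist_scaleC:
  assumes Y: "csubspace Y" and a: "a \<noteq> 0"
  shows "infdist (a *\<^sub>C x) Y = cmod a * infdist x Y"
proof (rule antisym)
  have "infdist x Y = infdist (inverse a *\<^sub>C (a *\<^sub>C x)) Y"
    using a by simp
  also have "\<dots> \<le> cmod (inverse a) * infdist (a *\<^sub>C x) Y"
    by (rule infdist_scaleC_le[OF Y])
  finally show "cmod a * infdist x Y \<le> infdist (a *\<^sub>C x) Y"
    using a by (simp add: norm_divide field_simps)
qed (rule infdist_scaleC_le[OF Y])

lemma infdist_add_csubspace: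
  assumes Y: "csubspace Y" and y: "y \<in> Y"
  shows "infdist (x + y) Y = infdist x Y"
proof -
  have le: "infdist (x' + y') Y \<le> infdist x' Y" if "y' \<in> Y" for x' y'
  proof (rule le_infdist)
    fix z assume "z \<in> Y"
    then have "infdist (x' + y') Y \<le> dist (x' + y') (z + y')"
      by (intro infdist_le csubspace_add[OF Y _ that])
    then show "infdist (x' + y') Y \<le> dist x' z" by (simp add: dist_norm)
  qed (use y in auto)
  show ?thesis
    using le[OF y, of x] le[OF csubspace_neg[OF Y y], of "x + y"] by simp
qed

lemma infdist_line_attains_inf:
  assumes Y: "csubspace Y" "closed Y" and v: "v \<notin> Y"
  obtains t0 where "\<And>t. infdist (t0 *\<^sub>C v - z) Y \<le> infdist (t *\<^sub>C v - z) Y"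
proof -
  define \<phi> where "\<phi> t = infdist (t *\<^sub>C v - z) Y" for t
  define r where "r = infdist v Y"
  have r: "r > 0"
    unfolding r_def using Y csubspace_0[OF Y(1)] v by (intro infdist_pos_not_in_closed) auto
  have coercive: "cmod t * r - norm z \<le> \<phi> t" for t
  proof -
    have "cmod t * r = infdist (t *\<^sub>C v) Y"
      using infdist_scaleC[OF Y(1), of t v] csubspace_0[OF Y(1)] unfolding r_def
      by (cases "t = 0") auto
    also have "\<dots> \<le> \<phi> t + dist (t *\<^sub>C v) (t *\<^sub>C v - z)"
      unfolding \<phi>_def by (rule infdist_triangle)
    finally show ?thesis by (simp add: dist_norm)
  qed
  have \<phi>0: "\<phi> 0 \<le> norm z"
    unfolding \<phi>_def using infdist_le[OF csubspace_0[OF Y(1)], of "-z"] by simp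
  define R where "R = (2 * norm z + 1) / r"
  have "continuous_on (cball 0 R) \<phi>"
    unfolding \<phi>_def by (intro continuous_intros)
  moreover have R0: "0 \<in> cball 0 R"
    using r by (simp add: R_def)
  ultimately have "\<exists>t0\<in>cball 0 R. \<forall>t\<in>cball 0 R. \<phi> t0 \<le> \<phi> t"
    by (intro continuous_attains_inf) auto
  then obtain t0 where t0: "\<And>t. t \<in> cball 0 R \<Longrightarrow> \<phi> t0 \<le> \<phi> t" by blast
  have t0_min: "\<phi> t0 \<le> \<phi> t" for t
  proof (cases "t \<in> cball 0 R")
    case False
    then have "R * r < cmod t * r" using r by simp
    then have "norm z < \<phi> t" using coercive[of t] r by (simp add: R_def)
    then show ?thesis using t0[OF R0] \<phi>0 by linarith
  qed (rule t0)
  show thesis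
    by (rule that[of t0]) (use t0_min in \<open>simp add: \<phi>_def\<close>)
qed

lemma closed_csubspace_add_line:
  assumes Y: "csubspace Y" "closed Y" and v: "v \<notin> Y"
  shows "closed {y + t *\<^sub>C v | y t. y \<in> Y}" (is "closed ?S")
proof -
  have "z \<in> ?S" if z: "z \<in> closure ?S" for z
  proof (rule ccontr)
    assume z_notin: "z \<notin> ?S"
    obtain t0 where t0: "\<And>t. infdist (t0 *\<^sub>C v - z) Y \<le> infdist (t *\<^sub>C v - z) Y"
      using infdist_line_attains_inf[OF Y v, of z] by blast
    have "t0 *\<^sub>C v - z \<notin> Y"
    proof
      assume "t0 *\<^sub>C v - z \<in> Y"
      then have "- (t0 *\<^sub>C v - z) + t0 *\<^sub>C v \<in> ?S" using csubspace_neg[OF Y(1)] by blast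
      then show False using z_notin by simp
    qed
    then have "infdist (t0 *\<^sub>C v - z) Y > 0"
      using Y csubspace_0[OF Y(1)] by (intro infdist_pos_not_in_closed) auto
    then obtain s where s: "s \<in> ?S" "dist s z < infdist (t0 *\<^sub>C v - z) Y"
      using z unfolding closure_approachable by blast
    then obtain y t where y: "y \<in> Y" and s_eq: "s = y + t *\<^sub>C v" by blast
    have "infdist (t *\<^sub>C v - z) Y \<le> dist (t *\<^sub>C v - z) (- y)"
      using csubspace_neg[OF Y(1) y] by (rule infdist_le)
    also have "\<dots> = dist s z"
      unfolding s_eq dist_norm by (simp add: algebra_simps)
    finally show False using s(2) t0[of t] by linarith
  qed
  then have "closure ?S \<subseteq> ?S" by blast
  then show ?thesis by (simp add: closure_subset_eq)
qed

lemma infdist_le_gap: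
  assumes A: "csubspace A" and B: "csubspace B" and y: "y \<in> A"
  shows "infdist y B \<le> gap A B * norm y"
proof (cases "y = 0")
  case True
  then show ?thesis using csubspace_0[OF B] by simp
next
  case False
  define u where "u = complex_of_real (1 / norm y) *\<^sub>C y"
  have u: "u \<in> A" "norm u = 1"
    unfolding u_def using False csubspace_scale[OF A y] by (auto simp: norm_scaleC norm_divide)
  have y_eq: "y = complex_of_real (norm y) *\<^sub>C u"
    unfolding u_def using False by (simp flip: of_real_mult)
  have "bdd_above ((\<lambda>u. infdist u B) ` {u\<in>A. norm u = 1})"
  proof (rule bdd_aboveI2[where M = 1])
    fix x assume "x \<in> {u\<in>A. norm u = 1}"
    then show "infdist x B \<le> 1" using infdist_le[OF csubspace_0[OF B], of x] by simp
  qed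
  then have "infdist u B \<le> (SUP u\<in>{u\<in>A. norm u = 1}. infdist u B)"
    using u by (intro cSUP_upper) auto
  then have "infdist u B \<le> gap A B"
    unfolding gap_def using y False by auto
  moreover have "infdist y B = norm y * infdist u B"
    using infdist_scaleC[OF B, of "complex_of_real (norm y)" u] False y_eq by simp
  ultimately show ?thesis by (simp add: mult.commute mult_left_mono)
qed

lemma gap_nonneg:
  assumes A: "csubspace A" and B: "csubspace B"
  shows "0 \<le> gap A B"
proof (cases "A \<subseteq> {0}")
  case False
  then obtain y where y: "y \<in> A" "y \<noteq> 0" by auto
  then have "0 \<le> gap A B * norm y"
    using infdist_le_gap[OF A B y(1)] infdist_nonneg[of y B] by linarith
  then show ?thesis using y by (simp add: zero_le_mult_iff)
qed (simp add: gap_def)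

fun ext_span :: "'a::complex_normed_vector set \<Rightarrow> (nat \<Rightarrow> 'a) \<Rightarrow> nat \<Rightarrow> 'a set" where
  "ext_span W0 f 0 = W0"
| "ext_span W0 f (Suc k) = {y + t *\<^sub>C f k | y t. y \<in> ext_span W0 f k}"

lemma ext_span_iff: "x \<in> ext_span W0 f k \<longleftrightarrow> (\<exists>w\<in>W0. \<exists>a. x = w + (\<Sum>i<k. a i *\<^sub>C f i))"
proof (induction k arbitrary: x)
  case (Suc k)
  show ?case
  proof
    assume "x \<in> ext_span W0 f (Suc k)"
    then obtain w a t where "w \<in> W0" "x = w + (\<Sum>i<k. a i *\<^sub>C f i) + t *\<^sub>C f k"
      using Suc.IH by auto
    moreover have "(\<Sum>i<Suc k. (a(k := t)) i *\<^sub>C f i) = (\<Sum>i<k. a i *\<^sub>C f i) + t *\<^sub>C f k"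
      by simp
    ultimately show "\<exists>w\<in>W0. \<exists>a. x = w + (\<Sum>i<Suc k. a i *\<^sub>C f i)"
      by (metis add.assoc)
  next
    assume "\<exists>w\<in>W0. \<exists>a. x = w + (\<Sum>i<Suc k. a i *\<^sub>C f i)"
    then obtain w a where "w \<in> W0" "x = (w + (\<Sum>i<k. a i *\<^sub>C f i)) + a k *\<^sub>C f k"
      by (auto simp: add.assoc)
    then show "x \<in> ext_span W0 f (Suc k)"
      using Suc.IH by auto
  qed
qed simp

lemma csubspace_ext_span: "csubspace W0 \<Longrightarrow> csubspace (ext_span W0 f k)"
proof (induction k)
  case (Suc k)
  have "ext_span W0 f (Suc k) = {x + y | x y. x \<in> ext_span W0 f k \<and> y \<in> cv.span {f k}}"
    by (auto simp: cv.span_singleton)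
  then show ?case
    using Suc by (simp add: csubspace_eq_subspace cv.subspace_sums)
qed simp

lemma ext_span_mono: "k \<le> l \<Longrightarrow> ext_span W0 f k \<subseteq> ext_span W0 f l"
proof (induction l rule: dec_induct)
  case (step l)
  have "x \<in> ext_span W0 f (Suc l)" if "x \<in> ext_span W0 f l" for x
  proof -
    have "x = x + 0 *\<^sub>C f l" by simp
    then show ?thesis using that by (simp only: ext_span.simps) blast
  qed
  with step show ?case by blast
qed simp

lemma ext_span_cong: "(\<And>j. j < k \<Longrightarrow> f j = g j) \<Longrightarrow> ext_span W0 f k = ext_span W0 g k"
  by (induction k) auto

lemma not_in_ext_span_if_cindep_mod:
  assumes ind: "cindep_mod e m W0" and k: "k < m"
  shows "e k \<notin> ext_span W0 e k"
proof
  assume "e k \<in> ext_span W0 e k"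
  then obtain w a where w: "w \<in> W0" and ek: "e k = w + (\<Sum>i<k. a i *\<^sub>C e i)"
    by (auto simp: ext_span_iff)
  define c where "c i = (if i < k then - a i else if i = k then 1 else 0)" for i
  have "(\<Sum>i<m. c i *\<^sub>C e i) = (\<Sum>i<Suc k. c i *\<^sub>C e i)"
    using k by (intro sum.mono_neutral_right) (auto simp: c_def)
  also have "\<dots> = e k - (\<Sum>i<k. a i *\<^sub>C e i)"
    by (simp add: c_def sum_negf)
  finally have "(\<Sum>i<m. c i *\<^sub>C e i) \<in> W0"
    using w ek by simp
  then have "c k = 0"
    using ind k unfolding cindep_mod_def by blast
  then show False by (simp add: c_def)
qed

definition almost_orthogonal :: "real \<Rightarrow> 'a::complex_normed_vector set \<Rightarrow> (nat \<Rightarrow> 'a) \<Rightarrow> nat \<Rightarrow> bool"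
  where "almost_orthogonal \<theta> W0 f m \<longleftrightarrow>
    (\<forall>i<m. f i \<noteq> 0 \<and> \<theta> * norm (f i) \<le> infdist (f i) (ext_span W0 f i))"

lemma almost_orthogonal_not_in_ext_span:
  assumes "almost_orthogonal \<theta> W0 f m" "0 < \<theta>" "i < m"
  shows "f i \<notin> ext_span W0 f i"
proof
  assume "f i \<in> ext_span W0 f i"
  then have "\<theta> * norm (f i) \<le> 0" and "f i \<noteq> 0"
    using assms unfolding almost_orthogonal_def by auto
  then show False using assms(2) by (simp add: mult_le_0_iff)
qed

lemma closed_ext_span:
  assumes W0: "csubspace W0" "closed W0" and f: "\<And>i. i < k \<Longrightarrow> f i \<notin> ext_span W0 f i"
  shows "closed (ext_span W0 f k)"
  using f
proof (induction k)
  case (Suc k)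
  then show ?case
    using closed_csubspace_add_line[OF csubspace_ext_span[OF W0(1)]] by simp
qed (simp add: W0)

lemma riesz_lemma:
  assumes Y: "csubspace Y" "closed Y" and e: "e \<notin> Y" and \<theta>: "0 < \<theta>" "\<theta> < 1"
  obtains y where "y \<in> Y" "e - y \<noteq> 0" "\<theta> * norm (e - y) \<le> infdist (e - y) Y"
proof -
  have "infdist e Y > 0"
    using Y csubspace_0[OF Y(1)] e by (intro infdist_pos_not_in_closed) auto
  then have "infdist e Y < infdist e Y / \<theta>"
    using \<theta> by (simp add: divide_simps)
  moreover have "Y \<noteq> {}"
    using csubspace_0[OF Y(1)] by auto
  ultimately obtain y where y: "y \<in> Y" "dist e y < infdist e Y / \<theta>"
    using infdist_lessE by blast
  have "infdist (e - y) Y = infdist e Y"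
    using infdist_add_csubspace[OF Y(1) csubspace_neg[OF Y(1) y(1)], of e] by simp
  moreover have "\<theta> * norm (e - y) < infdist e Y"
    using y(2) \<theta> by (simp add: dist_norm divide_simps mult.commute)
  moreover have "e - y \<noteq> 0"
    using e y(1) by auto
  ultimately show thesis using that y(1) by simp
qed

lemma exists_almost_orthogonal:
  assumes W0: "csubspace W0" "closed W0" and ind: "cindep_mod e m W0"
    and \<theta>: "0 < \<theta>" "\<theta> < 1"
  obtains f where "almost_orthogonal \<theta> W0 f m" "ext_span W0 f m \<subseteq> ext_span W0 e m"
proof -
  have "k \<le> m \<Longrightarrow> \<exists>f. almost_orthogonal \<theta> W0 f k \<and> ext_span W0 f k \<subseteq> ext_span W0 e k" for k
  proof (induction k)
    case 0
    then show ?case by (simp add: almost_orthogonal_def)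
  next
    case (Suc k)
    then obtain f where f: "almost_orthogonal \<theta> W0 f k" "ext_span W0 f k \<subseteq> ext_span W0 e k"
      by auto
    let ?Y = "ext_span W0 f k"
    have Y: "csubspace ?Y" "closed ?Y"
      using f(1) \<theta>(1) by (auto intro: csubspace_ext_span closed_ext_span W0
          dest: almost_orthogonal_not_in_ext_span)
    have "e k \<notin> ?Y"
      using f(2) not_in_ext_span_if_cindep_mod[OF ind] Suc.prems by auto
    then obtain y where y: "y \<in> ?Y" "e k - y \<noteq> 0" "\<theta> * norm (e k - y) \<le> infdist (e k - y) ?Y"
      using riesz_lemma[OF Y _ \<theta>] by blast
    define g where "g = f(k := e k - y)"
    have same: "ext_span W0 g i = ext_span W0 f i" if "i \<le> k" for i
      using that by (intro ext_span_cong) (simp add: g_def)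
    have "almost_orthogonal \<theta> W0 g (Suc k)"
      using f(1) y same unfolding almost_orthogonal_def g_def by (auto simp: less_Suc_eq)
    moreover have "ext_span W0 g (Suc k) \<subseteq> ext_span W0 e (Suc k)"
    proof
      fix x assume "x \<in> ext_span W0 g (Suc k)"
      then obtain z t where zt: "z \<in> ?Y" "x = z + t *\<^sub>C (e k - y)"
        using same[of k] by (auto simp: g_def)
      then have "x = (z - t *\<^sub>C y) + t *\<^sub>C e k"
        by (simp add: algebra_simps)
      moreover have "z - t *\<^sub>C y \<in> ext_span W0 e k"
        using zt(1) y(1) f(2) csubspace_ext_span[OF W0(1)]
        by (intro csubspace_diff csubspace_scale) auto
      ultimately show "x \<in> ext_span W0 e (Suc k)" by auto
    qed
    ultimately show ?case by blast
  qed
  then show thesis using that by blast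
qed

lemma almost_orthogonal_scaleC:
  assumes W0: "csubspace W0" and f: "almost_orthogonal \<theta> W0 f m" and i: "i < m"
  shows "\<theta> * (cmod a * norm (f i)) \<le> infdist (a *\<^sub>C f i) (ext_span W0 f i)"
proof (cases "a = 0")
  case False
  have "\<theta> * norm (f i) \<le> infdist (f i) (ext_span W0 f i)"
    using f i unfolding almost_orthogonal_def by blast
  from mult_left_mono[OF this, of "cmod a"] show ?thesis
    using infdist_scaleC[OF csubspace_ext_span[OF W0] False]
    by (simp add: ac_simps)
qed (simp add: infdist_nonneg)

lemma sum_norm_coeff_le_infdist:
  assumes W0: "csubspace W0" and f: "almost_orthogonal \<theta> W0 f m" and \<theta>: "0 < \<theta>"
  shows "k \<le> m \<Longrightarrow>
    (\<Sum>i<k. cmod (c i) * norm (f i)) \<le> ((1 + 1/\<theta>)^k - 1) * infdist (\<Sum>i<k. c i *\<^sub>C f i) W0"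
proof (induction k)
  case (Suc k)
  define x where "x = (\<Sum>i<k. c i *\<^sub>C f i)"
  define D where "D = infdist (x + c k *\<^sub>C f k) W0"
  define P where "P = cmod (c k) * norm (f k)"
  define B where "B = (1 + 1/\<theta>)^k"
  have B: "B \<ge> 1"
    unfolding B_def using \<theta> by simp
  have IH: "(\<Sum>i<k. cmod (c i) * norm (f i)) \<le> (B - 1) * infdist x W0"
    using Suc unfolding x_def B_def by simp
  have x: "x \<in> ext_span W0 f k"
    unfolding x_def ext_span_iff using csubspace_0[OF W0] by force
  have "\<theta> * P \<le> infdist (c k *\<^sub>C f k) (ext_span W0 f k)"
    unfolding P_def using almost_orthogonal_scaleC[OF W0 f] Suc.prems by simp
  also have "\<dots> = infdist (x + c k *\<^sub>C f k) (ext_span W0 f k)"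
    using infdist_add_csubspace[OF csubspace_ext_span[OF W0] x, of "c k *\<^sub>C f k"]
    by (simp add: add.commute)
  also have "\<dots> \<le> D"
    unfolding D_def using csubspace_0[OF W0] ext_span_mono[of 0 k W0 f]
    by (intro infdist_mono) auto
  finally have PD: "P \<le> D / \<theta>"
    using \<theta> by (simp add: field_simps)
  have "infdist x W0 \<le> D + P"
    using infdist_triangle[of x W0 "x + c k *\<^sub>C f k"]
    by (simp add: D_def P_def dist_norm norm_scaleC)
  then have "(\<Sum>i<Suc k. cmod (c i) * norm (f i)) \<le> (B - 1) * (D + P) + P"
    using IH mult_left_mono[of _ _ "B - 1"] B by (simp add: P_def) (meson order_trans)
  also have "\<dots> = (B - 1) * D + B * P"
    by (simp add: algebra_simps)
  also have "\<dots> \<le> (B - 1) * D + B * (D / \<theta>)"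
    using mult_left_mono[OF PD, of B] B by simp
  also have "\<dots> = ((1 + 1/\<theta>)^Suc k - 1) * D"
    unfolding B_def by (simp add: algebra_simps)
  finally show ?case
    unfolding D_def x_def by simp
qed simp

lemma bsp_csubspace: "bounded_symmetric_pair Q V \<Longrightarrow> csubspace V"
  and bsp_closed: "bounded_symmetric_pair Q V \<Longrightarrow> closed V"
  by (simp_all add: bounded_symmetric_pair_def closed_csubspace_def)

lemma bsp_add_left:
  "bounded_symmetric_pair Q V \<Longrightarrow> x \<in> V \<Longrightarrow> y \<in> V \<Longrightarrow> z \<in> V \<Longrightarrow> Q (x + y) z = Q x z + Q y z"
  and bsp_scaleC_left:
  "bounded_symmetric_pair Q V \<Longrightarrow> x \<in> V \<Longrightarrow> z \<in> V \<Longrightarrow> Q (a *\<^sub>C x) z = a * Q x z"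
  and bsp_cnj: "bounded_symmetric_pair Q V \<Longrightarrow> x \<in> V \<Longrightarrow> y \<in> V \<Longrightarrow> Q y x = cnj (Q x y)"
  unfolding bounded_symmetric_pair_def hermitian_sesq_def by blast+

lemma bsp_Im_diag: "bounded_symmetric_pair Q V \<Longrightarrow> x \<in> V \<Longrightarrow> Im (Q x x) = 0"
  using bsp_cnj[of Q V x x] by (metis cnj.simps(2) neg_equal_zero)

lemma bsp_zero_left: "bounded_symmetric_pair Q V \<Longrightarrow> z \<in> V \<Longrightarrow> Q 0 z = 0"
  using bsp_scaleC_left[of Q V 0 z 0] csubspace_0[OF bsp_csubspace, of Q V] by simp

lemma radical_subset: "radical Q V \<subseteq> V"
  by (auto simp: radical_def)

lemma csubspace_radical:
  assumes QV: "bounded_symmetric_pair Q V"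
  shows "csubspace (radical Q V)"
  unfolding csubspace_def radical_def
  using csubspace_0[OF bsp_csubspace[OF QV]] csubspace_add[OF bsp_csubspace[OF QV]]
    csubspace_scale[OF bsp_csubspace[OF QV]]
  by (auto simp: bsp_zero_left[OF QV] bsp_add_left[OF QV] bsp_scaleC_left[OF QV])

lemma bsp_diag_add_radical:
  assumes QV: "bounded_symmetric_pair Q V" and x: "x \<in> V" and r: "r \<in> radical Q V"
  shows "Q (x + r) (x + r) = Q x x"
proof -
  have rV: "r \<in> V" and xrV: "x + r \<in> V"
    using r x csubspace_add[OF bsp_csubspace[OF QV]] by (auto simp: radical_def)
  have "Q (x + r) (x + r) = Q x (x + r)"
    using bsp_add_left[OF QV x rV xrV] r xrV by (simp add: radical_def)
  also have "\<dots> = cnj (Q x x + Q r x)"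
    using bsp_cnj[OF QV xrV x] bsp_add_left[OF QV x rV x] by simp
  also have "\<dots> = Q x x"
    using r x bsp_cnj[OF QV x x] by (simp add: radical_def)
  finally show ?thesis .
qed

lemma bsp_norm_le:
  assumes "bounded_symmetric_pair Q V"
  obtains M where "M \<ge> 0" "\<And>x y. x \<in> V \<Longrightarrow> y \<in> V \<Longrightarrow> cmod (Q x y) \<le> M * (norm x * norm y)"
proof -
  obtain M where M: "\<forall>x\<in>V. \<forall>y\<in>V. cmod (Q x y) \<le> M * norm x * norm y"
    using assms by (auto simp: bounded_symmetric_pair_def)
  have "cmod (Q x y) \<le> \<bar>M\<bar> * (norm x * norm y)" if "x \<in> V" "y \<in> V" for x y
    using M that by (smt (verit) mult.assoc mult_right_mono zero_le_mult_iff norm_ge_zero)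
  then show thesis using that[of "\<bar>M\<bar>"] by simp
qed

lemma delta_c_admissible_nonempty:
  assumes QV: "bounded_symmetric_pair Q V" and RW: "bounded_symmetric_pair R W" and c: "c \<ge> 0"
  shows "\<exists>d\<ge>0. \<forall>x\<in>V. \<forall>y\<in>V. \<forall>u\<in>W. \<forall>v\<in>W.
      cmod (Q x y - R u v) \<le> d * (norm u + norm x) * (norm v + norm y)
        + c * ((norm u + norm x) * norm (v - y) + norm (u - x) * (norm v + norm y))"
proof -
  obtain MQ MR where MQ: "MQ \<ge> 0" "\<And>x y. x \<in> V \<Longrightarrow> y \<in> V \<Longrightarrow> cmod (Q x y) \<le> MQ * (norm x * norm y)"
    and MR: "MR \<ge> 0" "\<And>u v. u \<in> W \<Longrightarrow> v \<in> W \<Longrightarrow> cmod (R u v) \<le> MR * (norm u * norm v)"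
    using bsp_norm_le[OF QV] bsp_norm_le[OF RW] by metis
  have "cmod (Q x y - R u v) \<le> (MQ + MR) * (norm u + norm x) * (norm v + norm y)"
    if "x \<in> V" "y \<in> V" "u \<in> W" "v \<in> W" for x y u v
  proof -
    have "cmod (Q x y - R u v) \<le> MQ * (norm x * norm y) + MR * (norm u * norm v)"
      using norm_triangle_ineq4[of "Q x y" "R u v"] MQ(2) MR(2) that by smt
    also have "\<dots> \<le> MQ * ((norm u + norm x) * (norm v + norm y))
        + MR * ((norm u + norm x) * (norm v + norm y))"
      using MQ(1) MR(1) by (intro add_mono mult_left_mono mult_mono) auto
    finally show ?thesis by (simp add: algebra_simps)
  qed
  then show ?thesis
    using MQ(1) MR(1) c by (intro exI[of _ "MQ + MR"]) (smt (verit) mult_nonneg_nonneg norm_ge_zero)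
qed

lemma
  assumes QV: "bounded_symmetric_pair Q V" and RW: "bounded_symmetric_pair R W" and c: "c \<ge> 0"
  shows delta_c_nonneg: "delta_c c Q V R W \<ge> 0"
    and delta_c_bound: "\<And>x y u v. x \<in> V \<Longrightarrow> y \<in> V \<Longrightarrow> u \<in> W \<Longrightarrow> v \<in> W \<Longrightarrow>
      cmod (Q x y - R u v) \<le> delta_c c Q V R W * (norm u + norm x) * (norm v + norm y)
        + c * ((norm u + norm x) * norm (v - y) + norm (u - x) * (norm v + norm y))"
proof -
  define P where "P u x v y = (norm u + norm x) * (norm v + norm y)" for u x v y :: 'a
  define C where "C u x v y = c * ((norm u + norm x) * norm (v - y) + norm (u - x) * (norm v + norm y))"
    for u x v y :: 'a
  define S where "S = {d. d \<ge> 0 \<and> (\<forall>x\<in>V. \<forall>y\<in>V. \<forall>u\<in>W. \<forall>v\<in>W.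
      cmod (Q x y - R u v) \<le> d * P u x v y + C u x v y)}"
  have dc: "delta_c c Q V R W = Inf S"
    unfolding S_def delta_c_def P_def C_def by (simp add: mult.assoc)
  have S: "S \<noteq> {}"
    using delta_c_admissible_nonempty[OF QV RW c] unfolding S_def P_def C_def
    by (auto simp: mult.assoc)
  show "delta_c c Q V R W \<ge> 0"
    unfolding dc using S by (intro cInf_greatest) (auto simp: S_def)
  fix x y u v assume xyuv: "x \<in> V" "y \<in> V" "u \<in> W" "v \<in> W"
  have "cmod (Q x y - R u v) \<le> Inf S * P u x v y + C u x v y"
  proof (cases "P u x v y = 0")
    case True
    obtain d where "d \<in> S" using S by blast
    with True xyuv show ?thesis by (fastforce simp: S_def)
  next
    case False
    then have P: "P u x v y > 0"
      unfolding P_def by (smt (verit) mult_nonneg_nonneg norm_ge_zero)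
    have "(cmod (Q x y - R u v) - C u x v y) / P u x v y \<le> Inf S"
    proof (rule cInf_greatest[OF S])
      fix d assume "d \<in> S"
      then have "cmod (Q x y - R u v) \<le> d * P u x v y + C u x v y"
        using xyuv by (auto simp: S_def)
      then show "(cmod (Q x y - R u v) - C u x v y) / P u x v y \<le> d"
        using P by (simp add: divide_le_eq)
    qed
    then show ?thesis
      using P by (simp add: divide_le_eq)
  qed
  then show "cmod (Q x y - R u v) \<le> delta_c c Q V R W * (norm u + norm x) * (norm v + norm y)
        + c * ((norm u + norm x) * norm (v - y) + norm (u - x) * (norm v + norm y))"
    unfolding dc P_def C_def by (simp add: mult.assoc)
qed

lemma cmod_le_cmod_diff_if_opposite_signs:
  fixes h q r :: complex
  assumes "h \<in> {1, -1}" "Im q = 0" "Re (h * q) \<ge> 0" "Re (h * r) \<le> 0"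
  shows "cmod q \<le> cmod (q - r)"
proof -
  have "cmod q = \<bar>Re q\<bar>"
    using assms(2) by (rule cmod_eq_Re)
  also have "\<dots> \<le> \<bar>Re (q - r)\<bar>"
    using assms by auto
  also have "\<dots> \<le> cmod (q - r)"
    by (rule abs_Re_le_cmod)
  finally show ?thesis .
qed

lemma inverse_gamma_form_nonneg:
  "gamma_form Q V > 0 \<Longrightarrow> real_of_ereal (inverse (gamma_form Q V)) \<ge> 0"
  by (cases "gamma_form Q V") auto

lemma infdist_radical_sq_le:
  assumes gpos: "gamma_form Q V > 0" and x: "x \<in> V"
  shows "(infdist x (radical Q V))\<^sup>2 \<le> real_of_ereal (inverse (gamma_form Q V)) * cmod (Q x x)"
proof (cases "infdist x (radical Q V) = 0")
  case True
  then show ?thesis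
    using inverse_gamma_form_nonneg[OF gpos] by simp
next
  case False
  define D where "D = infdist x (radical Q V)"
  have D: "D > 0"
    using False infdist_nonneg unfolding D_def by (metis less_eq_real_def)
  have "V \<noteq> {0}"
    using gpos by (auto simp: gamma_form_def)
  moreover have "x \<notin> radical Q V"
    using False by auto
  ultimately have "gamma_form Q V \<le> ereal (cmod (Q x x) / D\<^sup>2)"
    unfolding gamma_form_def D_def using x by (auto intro!: INF_lower2)
  then obtain \<gamma> where \<gamma>: "gamma_form Q V = ereal \<gamma>" "\<gamma> > 0" "\<gamma> * D\<^sup>2 \<le> cmod (Q x x)"
    using gpos D by (cases "gamma_form Q V") (auto simp: le_divide_eq)
  then show ?thesis
    unfolding D_def[symmetric] by (simp add: field_simps)
qed

lemma delta_c_diag_bound: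
  assumes QV: "bounded_symmetric_pair Q V" and RW: "bounded_symmetric_pair R W" and c: "c \<ge> 0"
    and x: "x \<in> W" and x': "x' \<in> V" and \<delta>: "\<delta> \<ge> 0" and close: "norm (x - x') \<le> \<delta> * norm x"
  shows "cmod (Q x' x' - R x x) \<le> (norm x)\<^sup>2 *
    ((2 + \<delta>) * (2 * delta_c c Q V R W + (2 * delta_c c Q V R W + 2 * c) * \<delta>))"
proof -
  define Dc where "Dc = delta_c c Q V R W"
  define s where "s = norm x + norm x'"
  have Dc: "Dc \<ge> 0"
    unfolding Dc_def using delta_c_nonneg[OF QV RW c] .
  have s: "s \<le> (2 + \<delta>) * norm x"
    using norm_triangle_ineq4[of x "x - x'"] close unfolding s_def by (simp add: algebra_simps)
  have "cmod (Q x' x' - R x x) \<le> Dc * s * s + c * (2 * (s * norm (x - x')))"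
    using delta_c_bound[OF QV RW c x' x' x x] unfolding Dc_def s_def
    by (simp add: norm_minus_commute algebra_simps)
  also have "\<dots> \<le> Dc * ((2 + \<delta>) * norm x) * ((2 + \<delta>) * norm x)
      + c * (2 * ((2 + \<delta>) * norm x * (\<delta> * norm x)))"
    using s close Dc c \<delta> unfolding s_def
    by (intro add_mono mult_left_mono mult_mono) auto
  also have "\<dots> = (norm x)\<^sup>2 * ((2 + \<delta>) * (Dc * (2 + \<delta>) + 2 * c * \<delta>))"
    by (simp add: power2_eq_square algebra_simps)
  also have "\<dots> \<le> (norm x)\<^sup>2 * ((2 + \<delta>) * (2 * Dc + (2 * Dc + 2 * c) * \<delta>))"
    using Dc \<delta> by (intro mult_left_mono) (auto simp: algebra_simps)
  finally show ?thesis
    unfolding Dc_def .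
qed

lemma exists_close_by_gap:
  assumes W: "csubspace W" and V: "csubspace V" "closed V" and x: "x \<in> W" "x \<noteq> 0"
    and \<epsilon>: "gap W V < \<epsilon>"
  obtains x' where "x' \<in> V" "norm (x - x') \<le> 2 * gap W V * norm x" "norm (x - x') < \<epsilon> * norm x"
proof (cases "infdist x V = 0")
  case True
  then have "x \<in> V"
    using in_closed_iff_infdist_zero[OF V(2)] csubspace_0[OF V(1)] by blast
  then show thesis
    using that[of x] gap_nonneg[OF W V(1)] \<epsilon> x by simp
next
  case False
  have le: "infdist x V \<le> gap W V * norm x"
    using infdist_le_gap[OF W V(1) x(1)] .
  with False have "0 < gap W V * norm x"
    using infdist_nonneg[of x V] by linarith
  then have "infdist x V < min (2 * gap W V * norm x) (\<epsilon> * norm x)"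
    using le \<epsilon> x(2) by (auto intro: order.strict_trans1 mult_strict_right_mono)
  moreover have "V \<noteq> {}"
    using csubspace_0[OF V(1)] by auto
  ultimately obtain x' where "x' \<in> V" "dist x x' < min (2 * gap W V * norm x) (\<epsilon> * norm x)"
    using infdist_lessE by blast
  then show thesis
    using that[of x'] by (simp add: dist_norm)
qed

lemma exists_radical_near:
  assumes QV: "bounded_symmetric_pair Q V" and RW: "bounded_symmetric_pair R W"
    and h: "h \<in> {1, -1}" and c: "c \<ge> 0"
    and psd: "\<forall>x\<in>V. Re (h * Q x x) \<ge> 0" and gpos: "gamma_form Q V > 0"
    and x: "x \<in> W" "Re (h * R x x) \<le> 0"
    and \<delta>: "2 * gap W V \<le> \<delta>"
    and S: "S = sqrt (real_of_ereal (inverse (gamma_form Q V)) * (2 + \<delta>) *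
          (2 * delta_c c Q V R W + (2 * delta_c c Q V R W + 2 * c) * \<delta>))"
    and \<eta>: "gap W V + S < \<eta>"
  shows "\<exists>y\<in>radical Q V. norm (x - y) \<le> \<eta> * norm x"
proof (cases "x = 0")
  case True
  then show ?thesis
    using csubspace_0[OF csubspace_radical[OF QV]] by auto
next
  case False
  define d where "d = real_of_ereal (inverse (gamma_form Q V))"
  define K where "K = (2 + \<delta>) * (2 * delta_c c Q V R W + (2 * delta_c c Q V R W + 2 * c) * \<delta>)"
  have \<delta>0: "\<delta> \<ge> 0"
    using \<delta> gap_nonneg[OF bsp_csubspace[OF RW] bsp_csubspace[OF QV]] by simp
  have d: "d \<ge> 0"
    unfolding d_def using inverse_gamma_form_nonneg[OF gpos] .
  have "gap W V < \<eta> - S"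
    using \<eta> by simp
  then obtain x' where x': "x' \<in> V" "norm (x - x') \<le> 2 * gap W V * norm x"
      "norm (x - x') < (\<eta> - S) * norm x"
    using exists_close_by_gap[OF bsp_csubspace[OF RW] bsp_csubspace[OF QV] bsp_closed[OF QV] x(1)
        False] by blast
  have close: "norm (x - x') \<le> \<delta> * norm x"
    using x'(2) \<delta> by (smt (verit) mult_right_mono norm_ge_zero)
  \<comment> \<open>since hQ and hR have opposite signs here, Q x' x' is controlled by Q x' x' - R x x\<close>
  have "cmod (Q x' x') \<le> cmod (Q x' x' - R x x)"
    by (rule cmod_le_cmod_diff_if_opposite_signs[OF h bsp_Im_diag[OF QV x'(1)]])
      (use psd x'(1) x(2) in auto)
  also have "\<dots> \<le> (norm x)\<^sup>2 * K"
    unfolding K_def by (rule delta_c_diag_bound[OF QV RW c x(1) x'(1) \<delta>0 close])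
  finally have "d * cmod (Q x' x') \<le> d * ((norm x)\<^sup>2 * K)"
    using d by (rule mult_left_mono)
  then have "(infdist x' (radical Q V))\<^sup>2 \<le> d * ((norm x)\<^sup>2 * K)"
    using infdist_radical_sq_le[OF gpos x'(1)] unfolding d_def by linarith
  then have "(infdist x' (radical Q V))\<^sup>2 \<le> (norm x)\<^sup>2 * (d * K)"
    by (simp add: mult_ac)
  then have "infdist x' (radical Q V) \<le> sqrt ((norm x)\<^sup>2 * (d * K))"
    by (rule real_le_rsqrt)
  also have "\<dots> = norm x * S"
    unfolding S K_def d_def[symmetric] by (simp add: real_sqrt_mult mult.assoc)
  finally have "infdist x' (radical Q V) \<le> norm x * S" .
  then have "infdist x (radical Q V) < \<eta> * norm x"
    using infdist_triangle[of x "radical Q V" x'] x'(3) by (simp add: dist_norm algebra_simps)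
  moreover have "radical Q V \<noteq> {}"
    using csubspace_0[OF csubspace_radical[OF QV]] by auto
  ultimately obtain y where "y \<in> radical Q V" "dist x y < \<eta> * norm x"
    using infdist_lessE by blast
  then show ?thesis
    by (intro bexI[of _ y]) (auto simp: dist_norm)
qed

lemma exists_riesz_parameters:
  fixes s g0 :: real
  assumes "(2 ^ m - 1) * (s + g0 + s * g0) < 1"
  obtains \<theta> \<eta> where "0 < \<theta>" "\<theta> < 1" "s < \<eta>" "((1 + 1/\<theta>) ^ m - 1) * (\<eta> + g0 + \<eta> * g0) < 1"
proof -
  define \<eta> where "\<eta> \<theta> = s + (1 - \<theta>)" for \<theta> :: real
  have "((\<lambda>\<theta>. ((1 + 1/\<theta>) ^ m - 1) * (\<eta> \<theta> + g0 + \<eta> \<theta> * g0))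
      \<longlongrightarrow> ((1 + 1/1) ^ m - 1) * (\<eta> 1 + g0 + \<eta> 1 * g0)) (at_left 1)"
    unfolding \<eta>_def by (intro tendsto_intros) auto
  moreover have "((1 + 1/1) ^ m - 1) * (\<eta> 1 + g0 + \<eta> 1 * g0) < (1::real)"
    using assms by (simp add: \<eta>_def)
  ultimately have "\<forall>\<^sub>F \<theta> in at_left 1. ((1 + 1/\<theta>) ^ m - 1) * (\<eta> \<theta> + g0 + \<eta> \<theta> * g0) < 1"
    by (rule order_tendstoD(2))
  then obtain b where b: "b < 1"
    and small: "\<And>\<theta>. b < \<theta> \<Longrightarrow> \<theta> < 1 \<Longrightarrow> ((1 + 1/\<theta>) ^ m - 1) * (\<eta> \<theta> + g0 + \<eta> \<theta> * g0) < 1"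
    unfolding eventually_at_left_field by blast
  define \<theta> where "\<theta> = (max b 0 + 1) / 2"
  have "0 < \<theta>" "\<theta> < 1" "b < \<theta>"
    unfolding \<theta>_def using b by auto
  then show thesis
    using that[of \<theta> "\<eta> \<theta>"] small by (simp add: \<eta>_def)
qed

lemma smallness_consequences:
  fixes g g0 S N :: real and n :: nat
  assumes g: "0 \<le> g" "0 \<le> g0" and N: "N = (2::real) ^ (n + 1) * (n + 1)"
    and small: "g + g0 < 1 / N" and main: "S < (1 - N * (g + g0)) / (N * (1 + g0))"
  shows "2 * g \<le> N * g / (1 - N * g)"
    and "(2 ^ (n + 1) - 1) * ((g + S) + g0 + (g + S) * g0) < 1"
proof -
  have P: "(2::real) \<le> 2 ^ (n + 1)"
    by (metis one_le_numeral power_increasing power_one_right le_add2)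
  have N2: "2 ^ (n + 1) \<le> N"
    unfolding N by simp
  have N: "N \<ge> 2"
    using N2 P by linarith
  then have N0: "N > 0" by simp
  have gN: "g < 1 / N" and g0N: "g0 < 1 / N"
    using small g by auto
  then have Ng: "N * g < 1"
    using N0 by (simp add: less_divide_eq mult.commute)
  have "2 * g \<le> N * g"
    using N g by (intro mult_right_mono) auto
  also have "\<dots> \<le> N * g / (1 - N * g)"
    using Ng N0 g by (simp add: le_divide_eq mult_left_le)
  finally show "2 * g \<le> N * g / (1 - N * g)" .
  define F where "F = (g + S) + g0 + (g + S) * g0"
  have "S * (N * (1 + g0)) < 1 - N * (g + g0)"
    using main N0 g by (simp add: pos_less_divide_eq)
  then have "S + g + g0 + S * g0 < 1 / N"
    using N0 by (simp add: less_divide_eq algebra_simps)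
  moreover have "g * g0 < 1 / N * (1 / N)"
    using gN g0N g N0 by (intro mult_strict_mono) auto
  moreover have "F = (S + g + g0 + S * g0) + g * g0"
    unfolding F_def by (simp add: algebra_simps)
  ultimately have "F < 1 / N + 1 / N * (1 / N)"
    by linarith
  also have "\<dots> = (N + 1) / N\<^sup>2"
    using N0 by (simp add: field_simps power2_eq_square)
  finally have F: "F < (N + 1) / N\<^sup>2" .
  show "(2 ^ (n + 1) - 1) * ((g + S) + g0 + (g + S) * g0) < 1"
  proof (cases "F \<le> 0")
    case True
    then show ?thesis using P unfolding F_def by (smt (verit) mult_nonneg_nonpos)
  next
    case False
    then have "(2 ^ (n + 1) - 1) * F \<le> (N - 1) * F"
      using N2 by (intro mult_right_mono) auto
    also have "\<dots> < (N - 1) * ((N + 1) / N\<^sup>2)"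
      using F N by (intro mult_strict_left_mono) auto
    also have "\<dots> = (N\<^sup>2 - 1) / N\<^sup>2"
      by (simp add: power2_eq_square algebra_simps)
    also have "\<dots> < 1"
      using N0 by simp
    finally show ?thesis unfolding F_def .
  qed
qed

lemma mem_ext_span_Suc: "csubspace W0 \<Longrightarrow> f k \<in> ext_span W0 f (Suc k)"
  using csubspace_0[OF csubspace_ext_span, of W0 f k] by (force intro: exI[of _ 0] exI[of _ 1])

lemma not_cindep_mod_if_qdim_less:
  assumes "qdim A B = enat n" "n < m" "\<And>i. i < m \<Longrightarrow> y i \<in> A"
  shows "\<not> cindep_mod y m B"
proof
  assume "cindep_mod y m B"
  then have "enat m \<le> qdim A B"
    unfolding qdim_def using assms(3) by (blast intro: Sup_upper)
  then show False using assms(1,2) by simp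
qed

lemma infdist_lincomb_le:
  assumes V0: "csubspace V0" and W0: "csubspace W0" and yV0: "(\<Sum>i<m. a i *\<^sub>C y i) \<in> V0"
    and near: "\<And>i. i < m \<Longrightarrow> norm (f i - y i) \<le> \<eta> * norm (f i)"
  shows "infdist (\<Sum>i<m. a i *\<^sub>C f i) W0
    \<le> (\<Sum>i<m. cmod (a i) * norm (f i)) * (\<eta> + gap V0 W0 + \<eta> * gap V0 W0)"
proof -
  define T where "T = (\<Sum>i<m. cmod (a i) * norm (f i))"
  define x where "x = (\<Sum>i<m. a i *\<^sub>C f i)"
  define y' where "y' = (\<Sum>i<m. a i *\<^sub>C y i)"
  have "norm (x - y') = norm (\<Sum>i<m. a i *\<^sub>C (f i - y i))"
    unfolding x_def y'_def by (simp add: sum_subtractf cv.scale_right_diff_distrib)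
  also have "\<dots> \<le> (\<Sum>i<m. cmod (a i) * (\<eta> * norm (f i)))"
    using near by (intro order.trans[OF norm_sum] sum_mono) (simp add: norm_scaleC mult_left_mono)
  finally have xy': "norm (x - y') \<le> \<eta> * T"
    unfolding T_def by (simp add: sum_distrib_left mult_ac)
  have "norm x \<le> T"
    unfolding x_def T_def by (rule order.trans[OF norm_sum]) (simp add: norm_scaleC)
  then have "norm y' \<le> T + \<eta> * T"
    using norm_triangle_ineq4[of x "x - y'"] xy' by simp
  then have "infdist y' W0 \<le> gap V0 W0 * (T + \<eta> * T)"
    using infdist_le_gap[OF V0 W0 yV0[folded y'_def]] gap_nonneg[OF V0 W0]
    by (smt (verit) mult_left_mono)
  then have "infdist x W0 \<le> gap V0 W0 * (T + \<eta> * T) + \<eta> * T"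
    using infdist_triangle[of x W0 y'] xy' by (simp add: dist_norm)
  then show ?thesis
    unfolding x_def T_def by (simp add: algebra_simps)
qed

lemma not_cindep_mod_if_near:
  assumes W0: "csubspace W0" "closed W0" and V0: "csubspace V0" and n: "qdim A V0 = enat n"
    and near: "\<And>x. x \<in> ext_span W0 e (Suc n) \<Longrightarrow> \<exists>y\<in>A. norm (x - y) \<le> \<eta> * norm x"
    and \<theta>: "0 < \<theta>" "\<theta> < 1"
    and small: "((1 + 1/\<theta>) ^ Suc n - 1) * (\<eta> + gap V0 W0 + \<eta> * gap V0 W0) < 1"
  shows "\<not> cindep_mod e (Suc n) W0"
proof
  assume "cindep_mod e (Suc n) W0"
  then obtain f where f: "almost_orthogonal \<theta> W0 f (Suc n)"
    and f_span: "ext_span W0 f (Suc n) \<subseteq> ext_span W0 e (Suc n)"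
    using exists_almost_orthogonal[OF W0 _ \<theta>] by blast
  have "f i \<in> ext_span W0 e (Suc n)" if "i < Suc n" for i
    using mem_ext_span_Suc[OF W0(1), of f i] ext_span_mono[of "Suc i" "Suc n" W0 f] f_span that
    by (meson Suc_leI subsetD)
  then have "\<forall>i. \<exists>y. i < Suc n \<longrightarrow> y \<in> A \<and> norm (f i - y) \<le> \<eta> * norm (f i)"
    using near by blast
  then obtain y where y: "\<And>i. i < Suc n \<Longrightarrow> y i \<in> A \<and> norm (f i - y i) \<le> \<eta> * norm (f i)"
    by metis
  then obtain a i0 where a: "(\<Sum>i<Suc n. a i *\<^sub>C y i) \<in> V0" and i0: "i0 < Suc n" "a i0 \<noteq> 0"
    using not_cindep_mod_if_qdim_less[OF n, of "Suc n" y] unfolding cindep_mod_def by auto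
  define T where "T = (\<Sum>i<Suc n. cmod (a i) * norm (f i))"
  have "0 < cmod (a i0) * norm (f i0)"
    using i0 f unfolding almost_orthogonal_def by simp
  also have "\<dots> \<le> T"
    unfolding T_def using i0 by (intro member_le_sum) auto
  finally have "T > 0" .
  have K: "0 \<le> (1 + 1/\<theta>) ^ Suc n - 1"
    using \<theta>(1) by (simp del: power_Suc)
  have close: "infdist (\<Sum>i<Suc n. a i *\<^sub>C f i) W0 \<le> T * (\<eta> + gap V0 W0 + \<eta> * gap V0 W0)"
    unfolding T_def by (rule infdist_lincomb_le[OF V0 W0(1) a]) (use y in blast)
  \<comment> \<open>the coefficient bound and the closeness to A give incompatible estimates for T\<close>
  have "T \<le> ((1 + 1/\<theta>) ^ Suc n - 1) * infdist (\<Sum>i<Suc n. a i *\<^sub>C f i) W0"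
    unfolding T_def by (rule sum_norm_coeff_le_infdist[OF W0(1) f \<theta>(1)]) simp
  also have "\<dots> \<le> ((1 + 1/\<theta>) ^ Suc n - 1) * (T * (\<eta> + gap V0 W0 + \<eta> * gap V0 W0))"
    using close K by (rule mult_left_mono)
  also have "\<dots> < T"
    using mult_strict_left_mono[OF small \<open>T > 0\<close>] by (simp add: mult_ac)
  finally show False by simp
qed

lemma sum_lessThan_add:
  fixes k1 k2 :: nat
  shows "(\<Sum>i<k1 + k2. g i) = (\<Sum>i<k1. g i) + (\<Sum>j<k2. g (k1 + j))"
  by (induction k2) (simp_all add: add.assoc)

lemma cindep_mod_take:
  assumes ind: "cindep_mod u k B" and j: "j \<le> k"
  shows "cindep_mod u j B"
  unfolding cindep_mod_def
proof (intro allI impI)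
  fix c i assume s: "(\<Sum>i<j. c i *\<^sub>C u i) \<in> B" and i: "i < j"
  define c' where "c' i = (if i < j then c i else 0)" for i
  have "(\<Sum>i<k. c' i *\<^sub>C u i) = (\<Sum>i<j. c i *\<^sub>C u i)"
    using j by (subst sum.mono_neutral_right[of "{..<k}" "{..<j}"]) (auto simp: c'_def)
  then have "c' i = 0"
    using ind s i j unfolding cindep_mod_def by (metis less_le_trans)
  then show "c i = 0"
    using i by (simp add: c'_def)
qed

lemma cindep_mod_radical_if_neg_definite:
  assumes RW: "bounded_symmetric_pair R W" and u: "\<And>i. i < k \<Longrightarrow> u i \<in> W"
    and ind: "cindep_mod u k {0}"
    and neg: "\<And>c. (\<Sum>i<k. c i *\<^sub>C u i) \<noteq> 0 \<Longrightarrow>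
      Re (h * R (\<Sum>i<k. c i *\<^sub>C u i) (\<Sum>i<k. c i *\<^sub>C u i)) < 0"
  shows "cindep_mod u k (radical R W)"
  unfolding cindep_mod_def
proof (intro allI impI)
  fix c i assume rad: "(\<Sum>i<k. c i *\<^sub>C u i) \<in> radical R W" and i: "i < k"
  then have "R (\<Sum>i<k. c i *\<^sub>C u i) (\<Sum>i<k. c i *\<^sub>C u i) = 0"
    using radical_subset by (auto simp: radical_def)
  then have "(\<Sum>i<k. c i *\<^sub>C u i) = 0"
    using neg[of c] by force
  then show "c i = 0"
    using ind i unfolding cindep_mod_def by simp
qed

lemma cindep_mod_concat:
  assumes C: "csubspace C" "W0 \<subseteq> C" and u: "cindep_mod u k C"
    and w: "\<And>j. j < l \<Longrightarrow> w j \<in> C" "cindep_mod w l W0"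
  shows "cindep_mod (\<lambda>i. if i < k then u i else w (i - k)) (k + l) W0"
  unfolding cindep_mod_def
proof (intro allI impI)
  fix c i
  assume s: "(\<Sum>i<k + l. c i *\<^sub>C (if i < k then u i else w (i - k))) \<in> W0" and i: "i < k + l"
  define a where "a = (\<Sum>i<k. c i *\<^sub>C u i)"
  define b where "b = (\<Sum>j<l. c (k + j) *\<^sub>C w j)"
  have ab: "a + b \<in> W0"
    using s unfolding sum_lessThan_add a_def b_def by simp
  have "b \<in> C"
    unfolding b_def using C(1) w(1) by (rule csubspace_lincomb)
  then have "a \<in> C"
    using csubspace_diff[OF C(1), of "a + b" b] ab C(2) by auto
  then have c1: "\<forall>i<k. c i = 0"
    using u unfolding a_def cindep_mod_def by blast
  then have "b \<in> W0"
    using ab by (simp add: a_def)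
  then have "\<forall>j<l. c (k + j) = 0"
    using w(2)[unfolded cindep_mod_def, rule_format, of "\<lambda>j. c (k + j)"] unfolding b_def by blast
  then show "c i = 0"
    using c1 i by (metis add_diff_inverse_nat add_less_cancel_left)
qed

lemma ext_span_concat:
  assumes C: "csubspace C" "W0 \<subseteq> C" and w: "\<And>j. j < l \<Longrightarrow> w j \<in> C"
    and x: "x \<in> ext_span W0 (\<lambda>i. if i < k then u i else w (i - k)) (k + l)"
  shows "\<exists>a. x - (\<Sum>i<k. a i *\<^sub>C u i) \<in> C"
proof -
  obtain w0 a where w0: "w0 \<in> W0"
    and "x = w0 + (\<Sum>i<k + l. a i *\<^sub>C (if i < k then u i else w (i - k)))"
    using x by (auto simp: ext_span_iff)
  then have "x - (\<Sum>i<k. a i *\<^sub>C u i) = w0 + (\<Sum>j<l. a (k + j) *\<^sub>C w j)"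
    by (simp add: sum_lessThan_add algebra_simps)
  also have "\<dots> \<in> C"
    using w0 C w by (intro csubspace_add csubspace_lincomb) auto
  finally show ?thesis by blast
qed

lemma neg_definite_plus_radical_family:
  assumes RW: "bounded_symmetric_pair R W" and W0: "csubspace W0" "W0 \<subseteq> radical R W"
    and u: "\<And>i. i < k1 \<Longrightarrow> u i \<in> W" "cindep_mod u k1 {0}"
    and neg: "\<And>c. (\<Sum>i<k1. c i *\<^sub>C u i) \<noteq> 0 \<Longrightarrow>
      Re (h * R (\<Sum>i<k1. c i *\<^sub>C u i) (\<Sum>i<k1. c i *\<^sub>C u i)) < 0"
    and w: "\<And>j. j < k2 \<Longrightarrow> w j \<in> radical R W" "cindep_mod w k2 W0"
  defines "e \<equiv> \<lambda>i. if i < k1 then u i else w (i - k1)"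
  shows "cindep_mod e (k1 + k2) W0"
    and "\<And>x. x \<in> ext_span W0 e (k1 + k2) \<Longrightarrow> x \<in> W \<and> Re (h * R x x) \<le> 0"
proof -
  note rad = csubspace_radical[OF RW]
  show "cindep_mod e (k1 + k2) W0"
    unfolding e_def
    by (rule cindep_mod_concat[OF rad W0(2) cindep_mod_radical_if_neg_definite[OF RW u neg] w])
  fix x assume x_mem: "x \<in> ext_span W0 e (k1 + k2)"
  have "\<exists>a. x - (\<Sum>i<k1. a i *\<^sub>C u i) \<in> radical R W"
    by (rule ext_span_concat[OF rad W0(2), where w = w and l = k2 and k = k1 and u = u])
      (use w(1) x_mem in \<open>auto simp: e_def\<close>)
  then obtain a where r: "x - (\<Sum>i<k1. a i *\<^sub>C u i) \<in> radical R W" ..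
  define s where "s = (\<Sum>i<k1. a i *\<^sub>C u i)"
  have sW: "s \<in> W"
    unfolding s_def using bsp_csubspace[OF RW] u(1) by (rule csubspace_lincomb)
  have "x - s \<in> W"
    using r radical_subset[of R W] unfolding s_def by blast
  from csubspace_add[OF bsp_csubspace[OF RW] sW this] have "x \<in> W"
    by simp
  moreover have "R x x = R s s"
    using bsp_diag_add_radical[OF RW sW r[folded s_def]] by simp
  moreover have "Re (h * R s s) \<le> 0"
  proof (cases "s = 0")
    case True
    then show ?thesis
      using bsp_zero_left[OF RW csubspace_0[OF bsp_csubspace[OF RW]]] by simp
  next
    case False
    then show ?thesis
      using neg[of a] unfolding s_def by simp
  qed
  ultimately show "x \<in> W \<and> Re (h * R x x) \<le> 0" by simp
qed

lemma Sup_enat_add_le: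
  assumes "P 0" "Q 0" "\<And>a b. P a \<Longrightarrow> Q b \<Longrightarrow> a + b \<le> n"
  shows "Sup {enat k | k. P k} + Sup {enat k | k. Q k} \<le> enat n"
proof -
  have attained: "\<exists>a. R a \<and> Sup {enat k | k. R k} = enat a"
    if "R 0" "\<And>a. R a \<Longrightarrow> a \<le> n" for R
  proof -
    have "{enat k | k. R k} \<subseteq> enat ` {..n}"
      using that(2) by auto
    then have fin: "finite {enat k | k. R k}"
      by (rule finite_subset) simp
    have ne: "{enat k | k. R k} \<noteq> {}"
      using that(1) by auto
    have "Sup {enat k | k. R k} \<in> {enat k | k. R k}"
      using cSup_eq_Max[OF fin ne] Max_in[OF fin ne] by simp
    then show ?thesis by auto
  qed
  have "P a \<Longrightarrow> a \<le> n" "Q b \<Longrightarrow> b \<le> n" for a b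
    using assms(3)[of a 0] assms(3)[of 0 b] assms(1,2) by auto
  then obtain a b where "P a" "Q b" "Sup {enat k | k. P k} = enat a" "Sup {enat k | k. Q k} = enat b"
    using attained[of P] attained[of Q] assms(1,2) by blast
  then show ?thesis using assms(3) by simp
qed

lemma near_radical_parameters:
  fixes Q R :: "'a::complex_normed_vector \<Rightarrow> 'a \<Rightarrow> complex" and n :: nat
  assumes QV: "bounded_symmetric_pair Q V" and RW: "bounded_symmetric_pair R W"
    and h: "h \<in> {1, -1}" and c: "c \<ge> 0"
    and psd: "\<forall>x\<in>V. Re (h * Q x x) \<ge> 0" and gpos: "gamma_form Q V > 0"
    and V0: "csubspace V0" and W0: "csubspace W0"
    and small: "gap W V + gap V0 W0 < 1 / (2 ^ (n + 1) * (n + 1))"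
    and main: "let N = (2::real) ^ (n + 1) * (n + 1);
                   \<delta> = N * gap W V / (1 - N * gap W V);
                   d = real_of_ereal (inverse (gamma_form Q V));
                   e = 2 * delta_c c Q V R W;
                   f = 2 * delta_c c Q V R W + 2 * c
               in sqrt (d * (2 + \<delta>) * (e + f * \<delta>))
                  < (1 - N * (gap W V + gap V0 W0)) / (N * (1 + gap V0 W0))"
  obtains \<theta> \<eta> where "0 < \<theta>" "\<theta> < 1"
    "((1 + 1/\<theta>) ^ Suc n - 1) * (\<eta> + gap V0 W0 + \<eta> * gap V0 W0) < 1"
    "\<And>x. x \<in> W \<Longrightarrow> Re (h * R x x) \<le> 0 \<Longrightarrow> \<exists>y\<in>radical Q V. norm (x - y) \<le> \<eta> * norm x"
proof -
  define N where "N = (2::real) ^ (n + 1) * (n + 1)"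
  define \<delta> where "\<delta> = N * gap W V / (1 - N * gap W V)"
  define S where "S = sqrt (real_of_ereal (inverse (gamma_form Q V)) * (2 + \<delta>) *
    (2 * delta_c c Q V R W + (2 * delta_c c Q V R W + 2 * c) * \<delta>))"
  have g: "0 \<le> gap W V" "0 \<le> gap V0 W0"
    using gap_nonneg bsp_csubspace[OF QV] bsp_csubspace[OF RW] V0 W0 by auto
  have S_lt: "S < (1 - N * (gap W V + gap V0 W0)) / (N * (1 + gap V0 W0))"
    using main unfolding Let_def N_def[symmetric] \<delta>_def[symmetric] S_def[symmetric] .
  have "real (2 ^ (n + 1) * (n + 1)) = N"
    unfolding N_def by (simp add: algebra_simps)
  then have "gap W V + gap V0 W0 < 1 / N"
    using small by simp
  note consequences = smallness_consequences[OF g N_def this S_lt]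
  obtain \<theta> \<eta> where \<theta>: "0 < \<theta>" "\<theta> < 1" and \<eta>: "gap W V + S < \<eta>"
    and "((1 + 1/\<theta>) ^ (n + 1) - 1) * (\<eta> + gap V0 W0 + \<eta> * gap V0 W0) < 1"
    using exists_riesz_parameters[OF consequences(2)] by blast
  moreover note exists_radical_near[OF QV RW h c psd gpos _ _ consequences(1)[folded \<delta>_def] S_def \<eta>]
  ultimately show thesis
    using that by simp
qed

theorem proposition4p6:
  fixes Q R :: "'a::{complex_normed_vector, complete_space} \<Rightarrow> 'a \<Rightarrow> complex"
    and V W V0 W0 :: "'a set"
    and h :: complex and c :: real and n :: nat
  assumes QV: "bounded_symmetric_pair Q V"
    and RW: "bounded_symmetric_pair R W"
    and h: "h \<in> {1, -1}"
    and c: "c \<ge> 0"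
    and psd: "\<forall>x\<in>V. Re (h * Q x x) \<ge> 0"
    and gpos: "gamma_form Q V > 0"
    and V0: "closed_csubspace V0" "V0 \<subseteq> radical Q V"
    and W0: "closed_csubspace W0" "W0 \<subseteq> radical R W"
    and n: "qdim (radical Q V) V0 = enat n"
    and small: "gap W V + gap V0 W0 < 1 / (2 ^ (n + 1) * (n + 1))"
    and main: "let N = (2::real) ^ (n + 1) * (n + 1);
                   \<delta> = N * gap W V / (1 - N * gap W V);
                   d = real_of_ereal (inverse (gamma_form Q V));
                   e = 2 * delta_c c Q V R W;
                   f = 2 * delta_c c Q V R W + 2 * c
               in sqrt (d * (2 + \<delta>) * (e + f * \<delta>))
                  < (1 - N * (gap W V + gap V0 W0)) / (N * (1 + gap V0 W0))"
  shows "neg_index (\<lambda>x y. h * R x y) W + qdim (radical R W) W0 \<le> enat n"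
  unfolding neg_index_def qdim_def
proof (rule Sup_enat_add_le)
  fix k1 k2
  assume "\<exists>u. (\<forall>i<k1. u i \<in> W) \<and> cindep_mod u k1 {0} \<and> (\<forall>c. (\<Sum>i<k1. c i *\<^sub>C u i) \<noteq> 0
    \<longrightarrow> Re (h * R (\<Sum>i<k1. c i *\<^sub>C u i) (\<Sum>i<k1. c i *\<^sub>C u i)) < 0)"
    and "\<exists>w. (\<forall>i<k2. w i \<in> radical R W) \<and> cindep_mod w k2 W0"
  then obtain u w where u: "\<And>i. i < k1 \<Longrightarrow> u i \<in> W" "cindep_mod u k1 {0}"
    and neg: "\<And>c. (\<Sum>i<k1. c i *\<^sub>C u i) \<noteq> 0 \<Longrightarrow>
      Re (h * R (\<Sum>i<k1. c i *\<^sub>C u i) (\<Sum>i<k1. c i *\<^sub>C u i)) < 0"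
    and w: "\<And>j. j < k2 \<Longrightarrow> w j \<in> radical R W" "cindep_mod w k2 W0"
    by blast
  have V0': "csubspace V0" and W0': "csubspace W0" "closed W0"
    using V0(1) W0(1) by (auto simp: closed_csubspace_def)
  define e where "e = (\<lambda>i. if i < k1 then u i else w (i - k1))"
  note family = neg_definite_plus_radical_family[OF RW W0'(1) W0(2) u neg w, folded e_def]
  obtain \<theta> \<eta> where \<theta>: "0 < \<theta>" "\<theta> < 1"
    and small': "((1 + 1/\<theta>) ^ Suc n - 1) * (\<eta> + gap V0 W0 + \<eta> * gap V0 W0) < 1"
    and near: "\<And>x. x \<in> W \<Longrightarrow> Re (h * R x x) \<le> 0 \<Longrightarrow> \<exists>y\<in>radical Q V. norm (x - y) \<le> \<eta> * norm x"
    using near_radical_parameters[OF QV RW h c psd gpos V0' W0'(1) small main] by blast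
  show "k1 + k2 \<le> n"
  proof (rule ccontr)
    assume "\<not> k1 + k2 \<le> n"
    then have "Suc n \<le> k1 + k2" by simp
    then have "cindep_mod e (Suc n) W0" and "ext_span W0 e (Suc n) \<subseteq> ext_span W0 e (k1 + k2)"
      using cindep_mod_take[OF family(1)] ext_span_mono by blast+
    then show False
      using not_cindep_mod_if_near[OF W0' V0' n _ \<theta> small'] near family(2) by blast
  qed
qed (auto simp: cindep_mod_def)

end
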